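(* Let $O=\operatorname{Out}^0(A_\Gamma;\mathcal{G},\mathcal{H}^t)$ with $\mathcal{G}$ saturated with respect to $(\mathcal{G},\mathcal{H})$. Let $\operatorname{Aut}(\Gamma)$ be embedded in $\operatorname{Out}(A_\Gamma)$ via permutation of generators and set $\operatorname{Aut}^0(\Gamma)=\operatorname{Aut}(\Gamma)\cap O$. Then $\operatorname{Aut}^0(\Gamma)$ is naturally isomorphic to $\bigoplus_{[v]\in T_\mathcal{G}}\operatorname{Sym}([v])$, i.e. it consists exactly of the graph automorphisms preserving each $\sim$-class setwise, and every permutation of each class (fixing all other vertices) is a graph automorphism lying in $O$.
   Context: $\Gamma$ is a finite simplicial graph with vertex set $V(\Gamma)$. Subgraphs are always full subgraphs and are identified with their vertex sets. $A_\Gamma$ is the right-angled Artin group generated by $V(\Gamma)$ with relations $[v,w]=1$ for adjacent $v,w$. For $\Delta\subseteq\Gamma$, the special subgroup $A_\Delta\le A_\Gamma$ is the subgroup generated by $\Delta$. $\operatorname{lk}(v)$ is the set of vertices adjacent to $v$ and $\operatorname{st}(v)=\operatorname{lk}(v)\cup\{v\}$. An outer automorphism $\Phi$ stabilises a subgroup $H$ if some representative $\phi\in\Phi$ satisfies $\phi(H)=H$, and acts trivially on $H$ if some representative restricts to the identity on $H$. The Laurence generators of $\operatorname{Out}(A_\Gamma)$ are the classes of: inversions $\iota_v$ ($v\mapsto v^{-1}$); transvections $\rho_v^w$ for $v\neq w$ with $\operatorname{lk}(v)\subseteq\operatorname{st}(w)$ ($v\mapsto vw$); partial conjugations $\pi_K^v$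 for $K$ a union of connected components of $\Gamma\setminus\operatorname{st}(v)$ ($u\mapsto vuv^{-1}$ for $u\in K$); all other generators being fixed. $\operatorname{Out}^0(A_\Gamma)$ is the subgroup of $\operatorname{Out}(A_\Gamma)$ generated by these. For families $\mathcal{G},\mathcal{H}$ of special subgroups, $\operatorname{Out}^0(A_\Gamma;\mathcal{G},\mathcal{H}^t)$ is the subgroup of $\operatorname{Out}^0(A_\Gamma)$ consisting of elements stabilising every member of $\mathcal{G}$ and acting trivially on every member of $\mathcal{H}$. $\mathcal{G}$ is saturated with respect to $(\mathcal{G},\mathcal{H})$ if it contains every proper special subgroup of $A_\Gamma$ stabilised by $\operatorname{Out}^0(A_\Gamma;\mathcal{G},\mathcal{H}^t)$. The $\mathcal{G}$-ordering $\preceq$ on $V(\Gamma)$: $v\preceq w$ iff $\operatorname{lk}(v)\subseteq\operatorname{st}(w)$ and for every $A_\Delta\in\mathcal{G}$ with $v\in\Delta$ also $w\in\Delta$; $v\sim w$ iff $v\preceq w$ and $w\preceq v$; $[v]$ denotes the equivalence class and $T_\mathcal{G}$ the set of classes. *)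

theory Defs
  imports Main
begin

text \<open>Graph: finite vertex type 'v, adjacency relation E (assumed symmetric, irreflexive).
  Elements of the right-angled Artin group A_Gamma are represented by words
  (lists of letters (v, b), b = True meaning the inverse generator v^-1),
  modulo the congruence raag_eq E.\<close>

type_synonym 'v word = "('v \<times> bool) list"

definition inv_letter :: "'v \<times> bool \<Rightarrow> 'v \<times> bool" where
  "inv_letter x = (fst x, \<not> snd x)"

definition inv_word :: "'v word \<Rightarrow> 'v word" where
  "inv_word w = rev (map inv_letter w)"

inductive raag_eq :: "('v \<Rightarrow> 'v \<Rightarrow> bool) \<Rightarrow> 'v word \<Rightarrow> 'v word \<Rightarrow> bool"
  for E :: "'v \<Rightarrow> 'v \<Rightarrow> bool" where
  refl: "raag_eq E w w"
| sym: "raag_eq E u w \<Longrightarrow> raag_eq E w u"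
| trans: "raag_eq E u w \<Longrightarrow> raag_eq E w z \<Longrightarrow> raag_eq E u z"
| cancel: "raag_eq E (u @ [x, inv_letter x] @ w) (u @ w)"
| comm: "E (fst x) (fst y) \<Longrightarrow> raag_eq E (u @ [x, y] @ w) (u @ [y, x] @ w)"

definition gen :: "'v \<Rightarrow> 'v word" where
  "gen v = [(v, False)]"

text \<open>An endomorphism is given by the images of the generators.\<close>
definition ext :: "('v \<Rightarrow> 'v word) \<Rightarrow> 'v word \<Rightarrow> 'v word" where
  "ext f w = concat (map (\<lambda>x. if snd x then inv_word (f (fst x)) else f (fst x)) w)"

definition comp :: "('v \<Rightarrow> 'v word) \<Rightarrow> ('v \<Rightarrow> 'v word) \<Rightarrow> 'v \<Rightarrow> 'v word" where
  "comp f g = (\<lambda>v. ext f (g v))"   \<comment> \<open>first g, then f\<close>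

definition is_endo :: "('v \<Rightarrow> 'v \<Rightarrow> bool) \<Rightarrow> ('v \<Rightarrow> 'v word) \<Rightarrow> bool" where
  "is_endo E f \<longleftrightarrow> (\<forall>u v. E u v \<longrightarrow> raag_eq E (f u @ f v) (f v @ f u))"

definition inverse_auts :: "('v \<Rightarrow> 'v \<Rightarrow> bool) \<Rightarrow> ('v \<Rightarrow> 'v word) \<Rightarrow> ('v \<Rightarrow> 'v word) \<Rightarrow> bool" where
  "inverse_auts E f g \<longleftrightarrow> is_endo E f \<and> is_endo E g \<and>
     (\<forall>v. raag_eq E (comp f g v) (gen v)) \<and> (\<forall>v. raag_eq E (comp g f v) (gen v))"

definition inner :: "'v word \<Rightarrow> 'v \<Rightarrow> 'v word" where
  "inner c = (\<lambda>v. c @ gen v @ inv_word c)"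

definition lk :: "('v \<Rightarrow> 'v \<Rightarrow> bool) \<Rightarrow> 'v \<Rightarrow> 'v set" where
  "lk E v = {u. E v u}"

definition st :: "('v \<Rightarrow> 'v \<Rightarrow> bool) \<Rightarrow> 'v \<Rightarrow> 'v set" where
  "st E v = insert v (lk E v)"

definition inversion :: "'v \<Rightarrow> 'v \<Rightarrow> 'v word" where
  "inversion v = (\<lambda>u. if u = v then [(v, True)] else gen u)"

definition transvection :: "'v \<Rightarrow> 'v \<Rightarrow> 'v \<Rightarrow> 'v word" where
  "transvection v w = (\<lambda>u. if u = v then [(v, False), (w, False)] else gen u)"

definition partial_conj :: "'v \<Rightarrow> 'v set \<Rightarrow> 'v \<Rightarrow> 'v word" where
  "partial_conj v K = (\<lambda>u. if u \<in> K then [(v, False), (u, False), (v, True)] else gen u)"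

definition union_of_components :: "('v \<Rightarrow> 'v \<Rightarrow> bool) \<Rightarrow> 'v \<Rightarrow> 'v set \<Rightarrow> bool" where
  "union_of_components E v K \<longleftrightarrow> K \<inter> st E v = {} \<and>
     (\<forall>a b. a \<in> K \<longrightarrow> b \<notin> st E v \<longrightarrow> E a b \<longrightarrow> b \<in> K)"

definition laurence :: "('v \<Rightarrow> 'v \<Rightarrow> bool) \<Rightarrow> ('v \<Rightarrow> 'v word) \<Rightarrow> bool" where
  "laurence E f \<longleftrightarrow> (\<exists>v. f = inversion v)
     \<or> (\<exists>v w. v \<noteq> w \<and> lk E v \<subseteq> st E w \<and> f = transvection v w)
     \<or> (\<exists>v K. union_of_components E v K \<and> f = partial_conj v K)"

text \<open>out0 E: all automorphisms (given by generator images) whose outer class lies in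
  Out^0(A_Gamma), the subgroup of Out(A_Gamma) generated by the Laurence generators.\<close>
inductive_set out0 :: "('v \<Rightarrow> 'v \<Rightarrow> bool) \<Rightarrow> ('v \<Rightarrow> 'v word) set"
  for E :: "'v \<Rightarrow> 'v \<Rightarrow> bool" where
  gen: "laurence E f \<Longrightarrow> f \<in> out0 E"
| inn: "inner c \<in> out0 E"
| comp: "f \<in> out0 E \<Longrightarrow> g \<in> out0 E \<Longrightarrow> comp f g \<in> out0 E"
| inv: "f \<in> out0 E \<Longrightarrow> inverse_auts E f g \<Longrightarrow> g \<in> out0 E"
| eq: "f \<in> out0 E \<Longrightarrow> (\<forall>v. raag_eq E (f v) (g v)) \<Longrightarrow> g \<in> out0 E"

text \<open>The special subgroup A_Delta, as the set of words representing its elements.\<close>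
definition special :: "('v \<Rightarrow> 'v \<Rightarrow> bool) \<Rightarrow> 'v set \<Rightarrow> 'v word set" where
  "special E \<Delta> = {w. \<exists>w'. set (map fst w') \<subseteq> \<Delta> \<and> raag_eq E w w'}"

definition image_of :: "('v \<Rightarrow> 'v \<Rightarrow> bool) \<Rightarrow> ('v \<Rightarrow> 'v word) \<Rightarrow> 'v word set \<Rightarrow> 'v word set" where
  "image_of E h S = {w. \<exists>u\<in>S. raag_eq E (ext h u) w}"

text \<open>The outer class of f stabilises A_Delta: some representative maps it onto itself.\<close>
definition stabilises :: "('v \<Rightarrow> 'v \<Rightarrow> bool) \<Rightarrow> ('v \<Rightarrow> 'v word) \<Rightarrow> 'v set \<Rightarrow> bool" where
  "stabilises E f \<Delta> \<longleftrightarrow> (\<exists>c. image_of E (comp (inner c) f) (special E \<Delta>) = special E \<Delta>)"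

definition acts_trivially :: "('v \<Rightarrow> 'v \<Rightarrow> bool) \<Rightarrow> ('v \<Rightarrow> 'v word) \<Rightarrow> 'v set \<Rightarrow> bool" where
  "acts_trivially E f \<Delta> \<longleftrightarrow>
     (\<exists>c. \<forall>w. set (map fst w) \<subseteq> \<Delta> \<longrightarrow> raag_eq E (ext (comp (inner c) f) w) w)"

text \<open>Membership (of the outer class of f) in Out^0(A_Gamma; G, H^t).
  Families of special subgroups are given by their vertex sets.\<close>
definition inO :: "('v \<Rightarrow> 'v \<Rightarrow> bool) \<Rightarrow> 'v set set \<Rightarrow> 'v set set \<Rightarrow> ('v \<Rightarrow> 'v word) \<Rightarrow> bool" where
  "inO E G H f \<longleftrightarrow> f \<in> out0 E \<and> (\<forall>\<Delta>\<in>G. stabilises E f \<Delta>) \<and> (\<forall>\<Delta>\<in>H. acts_trivially E f \<Delta>)"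

definition saturated :: "('v \<Rightarrow> 'v \<Rightarrow> bool) \<Rightarrow> 'v set set \<Rightarrow> 'v set set \<Rightarrow> bool" where
  "saturated E G H \<longleftrightarrow>
     (\<forall>\<Delta>. \<Delta> \<noteq> UNIV \<longrightarrow> (\<forall>f. inO E G H f \<longrightarrow> stabilises E f \<Delta>) \<longrightarrow> \<Delta> \<in> G)"

definition G_le :: "('v \<Rightarrow> 'v \<Rightarrow> bool) \<Rightarrow> 'v set set \<Rightarrow> 'v \<Rightarrow> 'v \<Rightarrow> bool" where
  "G_le E G v w \<longleftrightarrow> lk E v \<subseteq> st E w \<and> (\<forall>\<Delta>\<in>G. v \<in> \<Delta> \<longrightarrow> w \<in> \<Delta>)"

definition G_equiv :: "('v \<Rightarrow> 'v \<Rightarrow> bool) \<Rightarrow> 'v set set \<Rightarrow> 'v \<Rightarrow> 'v \<Rightarrow> bool" where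
  "G_equiv E G v w \<longleftrightarrow> G_le E G v w \<and> G_le E G w v"

definition graph_aut :: "('v \<Rightarrow> 'v \<Rightarrow> bool) \<Rightarrow> ('v \<Rightarrow> 'v) \<Rightarrow> bool" where
  "graph_aut E \<sigma> \<longleftrightarrow> bij \<sigma> \<and> (\<forall>u v. E u v \<longleftrightarrow> E (\<sigma> u) (\<sigma> v))"

definition perm_aut :: "('v \<Rightarrow> 'v) \<Rightarrow> 'v \<Rightarrow> 'v word" where
  "perm_aut \<sigma> = (\<lambda>v. gen (\<sigma> v))"

end

theory Submission
  imports Defs "HOL-Combinatorics.Cycles"
begin

text \<open>Abelianisation sends \<open>Out\<^sup>0(A\<^sub>\<Gamma>)\<close> into the integer matrices that are invertible and
  triangular for the domination preorder \<open>lk v \<subseteq> st u\<close>, since every Laurence generator has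
  such a matrix with such an inverse. For a permutation \<open>\<sigma>\<close> in \<open>O\<close> this gives
  \<open>lk v \<subseteq> st (\<sigma> v)\<close>, and stabilising each member of \<open>\<G>\<close> gives the other half of
  \<open>v \<preceq> \<sigma> v\<close>; as \<open>\<sigma>\<close> has finite order, also \<open>\<sigma> v \<preceq> v\<close>. Conversely a transposition of
  two vertices dominating each other is a product of Laurence generators and an inner
  automorphism, and a permutation preserving the \<open>\<sim>\<close>-classes preserves adjacency and every member
  of \<open>\<G>\<close>. By saturation every singleton inside a member of \<open>\<H>\<close> lies in \<open>\<G>\<close>, so such a
  permutation fixes the members of \<open>\<H>\<close> pointwise.\<close>

section \<open>Words modulo the defining relations\<close>

lemmas [trans] = raag_eq.trans

lemma inv_letter_Pair [simp]: "inv_letter (v, s) = (v, \<not> s)"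
  by (simp add: inv_letter_def)

lemma inv_letter_inv_letter [simp]: "inv_letter (inv_letter x) = x"
  by (simp add: inv_letter_def)

lemma inv_word_simps [simp]:
  "inv_word [] = []"
  "inv_word (x # w) = inv_word w @ [inv_letter x]"
  "inv_word (u @ w) = inv_word w @ inv_word u"
  by (simp_all add: inv_word_def)

lemma inv_word_inv_word [simp]: "inv_word (inv_word w) = w"
  by (induction w) simp_all

lemma raag_eq_append_cong: "raag_eq E u w \<Longrightarrow> raag_eq E (p @ u @ q) (p @ w @ q)"
proof (induction rule: raag_eq.induct)
  case (cancel u x w)
  show ?case using raag_eq.cancel[of E "p @ u" x "w @ q"] by simp
next
  case (comm x y u w)
  then show ?case using raag_eq.comm[of E x y "p @ u" "w @ q"] by simp
qed (auto intro: raag_eq.refl raag_eq.sym raag_eq.trans)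

lemma raag_eq_append: "raag_eq E u w \<Longrightarrow> raag_eq E u' w' \<Longrightarrow> raag_eq E (u @ u') (w @ w')"
  using raag_eq_append_cong[of E u w "[]" u'] raag_eq_append_cong[of E u' w' w "[]"]
  by (simp add: raag_eq.trans)

lemma raag_eq_append_inv_word: "raag_eq E (w @ inv_word w) []"
proof (induction w)
  case (Cons x w)
  have "raag_eq E ([x] @ (w @ inv_word w) @ [inv_letter x]) ([x] @ [] @ [inv_letter x])"
    using Cons by (rule raag_eq_append_cong)
  also have "raag_eq E ([x] @ [] @ [inv_letter x]) []"
    using raag_eq.cancel[of E "[]" x "[]"] by simp
  finally show ?case by simp
qed (simp add: raag_eq.refl)

lemma raag_eq_inv_word_append: "raag_eq E (inv_word w @ w) []"
  using raag_eq_append_inv_word[of E "inv_word w"] by simp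

lemma raag_eq_inv_word:
  assumes "symp E"
  shows "raag_eq E u w \<Longrightarrow> raag_eq E (inv_word u) (inv_word w)"
proof (induction rule: raag_eq.induct)
  case (cancel u x w)
  show ?case using raag_eq.cancel[of E "inv_word w" x "inv_word u"] by simp
next
  case (comm x y u w)
  then show ?case
    using raag_eq.comm[of E "inv_letter y" "inv_letter x" "inv_word w" "inv_word u"] assms
    by (simp add: inv_letter_def symp_def)
qed (auto intro: raag_eq.refl raag_eq.sym raag_eq.trans)

text \<open>Stars rather than links: two letters on the same vertex are equal or mutually inverse.\<close>
lemma raag_eq_swap_letters:
  assumes "fst y \<in> st E (fst x)"
  shows "raag_eq E (p @ x # y # q) (p @ y # x # q)"
proof -
  obtain a s b t where xy: "x = (a, s)" "y = (b, t)" by fastforce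
  have "b = a \<or> E a b" using assms xy by (simp add: st_def lk_def)
  then consider "y = x" | "y = inv_letter x" | "E (fst x) (fst y)"
    using xy by (cases s; cases t) (auto simp: inv_letter_def)
  then show ?thesis
  proof cases
    case 2
    have "raag_eq E (p @ [x, inv_letter x] @ q) (p @ q)" by (rule raag_eq.cancel)
    moreover have "raag_eq E (p @ [inv_letter x, x] @ q) (p @ q)"
      using raag_eq.cancel[of E p "inv_letter x" q] by simp
    ultimately show ?thesis using 2 by (metis raag_eq.sym raag_eq.trans append_Cons append_Nil)
  next
    case 3
    then show ?thesis using raag_eq.comm[of E x y p q] by simp
  qed (simp add: raag_eq.refl)
qed

lemma raag_eq_commute_words:
  assumes "\<And>x y. x \<in> set u \<Longrightarrow> y \<in> set w \<Longrightarrow> fst y \<in> st E (fst x)"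
  shows "raag_eq E (u @ w) (w @ u)"
  using assms
proof (induction u)
  case (Cons x u)
  have move_x: "raag_eq E (x # w') (w' @ [x])" if "\<And>y. y \<in> set w' \<Longrightarrow> fst y \<in> st E (fst x)"
    for w' using that
  proof (induction w')
    case (Cons y w')
    have "raag_eq E (x # y # w') (y # x # w')"
      using raag_eq_swap_letters[of y E x "[]" w'] Cons.prems by simp
    also have "raag_eq E (y # x # w') (y # w' @ [x])"
      using raag_eq_append_cong[OF Cons.IH, of "[y]" "[]"] Cons.prems by simp
    finally show ?case by simp
  qed (simp add: raag_eq.refl)
  have "raag_eq E (x # w) (w @ [x])"
    using Cons.prems by (intro move_x) simp
  then have "raag_eq E (x # w @ u) (w @ x # u)"
    using raag_eq_append_cong[of E "x # w" "w @ [x]" "[]" u] by simp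
  moreover have "raag_eq E (x # u @ w) (x # w @ u)"
    using raag_eq_append_cong[OF Cons.IH, of "[x]" "[]"] Cons.prems by simp
  ultimately show ?case using raag_eq.trans by fastforce
qed (simp add: raag_eq.refl)

lemma raag_eq_commute_inv_word:
  assumes "raag_eq E (p @ q) (q @ p)"
  shows "raag_eq E (inv_word p @ q) (q @ inv_word p)"
proof -
  have "raag_eq E (inv_word p @ q) (inv_word p @ q @ p @ inv_word p)"
    using raag_eq_append_cong[OF raag_eq.sym[OF raag_eq_append_inv_word[of E p]],
        of "inv_word p @ q" "[]"] by simp
  also have "raag_eq E (\<dots>) (inv_word p @ p @ q @ inv_word p)"
    using raag_eq_append_cong[OF raag_eq.sym[OF assms], of "inv_word p" "inv_word p"] by simp
  also have "raag_eq E (\<dots>) (q @ inv_word p)"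
    using raag_eq_append_cong[OF raag_eq_inv_word_append[of E p], of "[]" "q @ inv_word p"] by simp
  finally show ?thesis .
qed

text \<open>Free reduction with a stack holding the reversed reduced prefix. Equality of free
  reductions is decided by evaluation, which settles the concrete identities below.\<close>
fun free_reduce :: "'v word \<Rightarrow> 'v word \<Rightarrow> 'v word" where
  "free_reduce acc [] = rev acc"
| "free_reduce [] (x # w) = free_reduce [x] w"
| "free_reduce (a # acc) (x # w) =
     (if x = inv_letter a then free_reduce acc w else free_reduce (x # a # acc) w)"

lemma raag_eq_free_reduce: "raag_eq E (rev acc @ w) (free_reduce acc w)"
proof (induction acc w rule: free_reduce.induct)
  case (3 a acc x w)
  show ?case
  proof (cases "x = inv_letter a")
    case True
    have "raag_eq E (rev acc @ [a, inv_letter a] @ w) (rev acc @ w)" by (rule raag_eq.cancel)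
    with 3(1)[OF True] True show ?thesis using raag_eq.trans by fastforce
  qed (use 3(2) in simp)
qed (simp_all add: raag_eq.refl)

lemma raag_eq_if_free_reduce_eq: "free_reduce [] u = free_reduce [] w \<Longrightarrow> raag_eq E u w"
  using raag_eq_free_reduce[of E "[]"] by (metis append_Nil rev.simps(1) raag_eq.sym raag_eq.trans)

section \<open>Endomorphisms given by images of generators\<close>

definition letter_image :: "('v \<Rightarrow> 'v word) \<Rightarrow> 'v \<times> bool \<Rightarrow> 'v word" where
  "letter_image f x = (if snd x then inv_word (f (fst x)) else f (fst x))"

lemma letter_image_simps [simp]:
  "letter_image f (v, False) = f v"
  "letter_image f (v, True) = inv_word (f v)"
  by (simp_all add: letter_image_def)

lemma ext_simps [simp]:
  "ext f [] = []"
  "ext f (x # w) = letter_image f x @ ext f w"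
  "ext f (u @ w) = ext f u @ ext f w"
  by (simp_all add: ext_def letter_image_def)

lemma ext_gen [simp]: "ext f (gen v) = f v"
  by (simp add: gen_def)

lemma letter_images_commute:
  assumes "symp E" and "is_endo E f" and "E (fst x) (fst y)"
  shows "raag_eq E (letter_image f x @ letter_image f y) (letter_image f y @ letter_image f x)"
proof -
  let ?a = "f (fst x)" and ?b = "f (fst y)"
  have ab: "raag_eq E (?a @ ?b) (?b @ ?a)"
    using assms(2,3) by (simp add: is_endo_def)
  have "raag_eq E (inv_word ?a @ ?b) (?b @ inv_word ?a)"
    using ab by (rule raag_eq_commute_inv_word)
  moreover have "raag_eq E (inv_word ?b @ ?a) (?a @ inv_word ?b)"
    using raag_eq.sym[OF ab] by (rule raag_eq_commute_inv_word)
  moreover have "raag_eq E (inv_word ?b @ inv_word ?a) (inv_word ?a @ inv_word ?b)"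
    using raag_eq_inv_word[OF assms(1) ab] by simp
  ultimately show ?thesis
    using ab by (auto simp: letter_image_def intro: raag_eq.sym)
qed

lemma raag_eq_ext:
  assumes "symp E" and "is_endo E f"
  shows "raag_eq E u w \<Longrightarrow> raag_eq E (ext f u) (ext f w)"
proof (induction rule: raag_eq.induct)
  case (cancel u x w)
  have "raag_eq E (letter_image f x @ letter_image f (inv_letter x)) []"
    using raag_eq_append_inv_word raag_eq_inv_word_append
    by (auto simp: letter_image_def inv_letter_def)
  then show ?case using raag_eq_append_cong by fastforce
next
  case (comm x y u w)
  then show ?case
    using raag_eq_append_cong[OF letter_images_commute[OF assms comm.hyps]] by simp
qed (auto intro: raag_eq.refl raag_eq.sym raag_eq.trans)

lemma is_endo_comp:
  assumes "symp E" and "is_endo E f" and "is_endo E g"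
  shows "is_endo E (comp f g)"
  unfolding is_endo_def comp_def
proof (intro allI impI)
  fix u v assume "E u v"
  then have "raag_eq E (g u @ g v) (g v @ g u)" using assms(3) by (simp add: is_endo_def)
  then show "raag_eq E (ext f (g u) @ ext f (g v)) (ext f (g v) @ ext f (g u))"
    using raag_eq_ext[OF assms(1,2)] by fastforce
qed

lemma is_endo_raag_eq:
  assumes "is_endo E f" and "\<And>v. raag_eq E (f v) (g v)"
  shows "is_endo E g"
  unfolding is_endo_def
proof (intro allI impI)
  fix u v assume "E u v"
  then have "raag_eq E (f u @ f v) (f v @ f u)" using assms(1) by (simp add: is_endo_def)
  then show "raag_eq E (g u @ g v) (g v @ g u)"
    using raag_eq_append assms(2) raag_eq.sym raag_eq.trans by meson
qed

lemma is_endo_inner: "is_endo E (inner c)"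
  unfolding is_endo_def
proof (intro allI impI)
  have conj_product:
    "raag_eq E (inner c u @ inner c v) (c @ [(u, False), (v, False)] @ inv_word c)" for u v
    using raag_eq_append_cong[OF raag_eq_inv_word_append[of E c],
        of "c @ gen u" "gen v @ inv_word c"]
    by (simp add: inner_def gen_def)
  fix u v assume "E u v"
  then have "raag_eq E (c @ [(u, False), (v, False)] @ inv_word c)
      (c @ [(v, False), (u, False)] @ inv_word c)"
    using raag_eq.comm[of E "(u, False)" "(v, False)" c "inv_word c"] by simp
  then show "raag_eq E (inner c u @ inner c v) (inner c v @ inner c u)"
    using conj_product raag_eq.sym raag_eq.trans by meson
qed

lemma is_endo_if_star_supports:
  assumes "\<And>a b x y. E a b \<Longrightarrow> x \<in> set (f a) \<Longrightarrow> y \<in> set (f b) \<Longrightarrow> fst y \<in> st E (fst x)"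
  shows "is_endo E f"
  unfolding is_endo_def using assms by (blast intro: raag_eq_commute_words)

lemma is_endo_laurence:
  assumes "symp E" and "irreflp E" and "laurence E f"
  shows "is_endo E f"
  using assms(3) unfolding laurence_def
proof (elim disjE exE conjE)
  fix v assume "f = inversion v"
  then show ?thesis
    by (intro is_endo_if_star_supports) (auto simp: inversion_def gen_def st_def lk_def split: if_splits)
next
  fix v w assume "lk E v \<subseteq> st E w" and f: "f = transvection v w"
  then have "E v b \<Longrightarrow> b = w \<or> E w b" and "E a v \<Longrightarrow> a = w \<or> E a w" for a b
    using assms(1) by (auto simp: lk_def st_def symp_def)
  then show ?thesis
    using assms(1,2) unfolding f
    by (intro is_endo_if_star_supports)
      (auto simp: transvection_def gen_def st_def lk_def irreflp_def split: if_splits; blast)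
next
  fix v K assume K: "union_of_components E v K" and f: "f = partial_conj v K"
  have adj_v: "E v b" if "E a b" "a \<in> K" "b \<notin> K" for a b
  proof -
    have "b \<in> st E v" using K that unfolding union_of_components_def by blast
    moreover have "a \<notin> st E v" using K \<open>a \<in> K\<close> unfolding union_of_components_def by blast
    then have "b \<noteq> v" using \<open>E a b\<close> assms(1) by (auto simp: st_def lk_def dest: sympD)
    ultimately show ?thesis by (simp add: st_def lk_def)
  qed
  have mixed: "raag_eq E (f a @ f b) (f b @ f a)" if "E a b" "a \<in> K" "b \<notin> K" for a b
    using that adj_v[OF that] unfolding f
    by (intro raag_eq_commute_words) (auto simp: partial_conj_def gen_def st_def lk_def)
  show ?thesis unfolding is_endo_def
  proof (intro allI impI)
    fix a b assume "E a b"
    then have "E b a" using assms(1) by (simp add: sympD)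
    consider "a \<in> K" "b \<in> K" | "a \<in> K" "b \<notin> K" | "a \<notin> K" "b \<in> K" | "a \<notin> K" "b \<notin> K"
      by blast
    then show "raag_eq E (f a @ f b) (f b @ f a)"
    proof cases
      case 1
      then show ?thesis
        using is_endo_inner[of E "[(v, False)]"] \<open>E a b\<close>
        by (simp add: f partial_conj_def is_endo_def inner_def gen_def)
    next
      case 2
      then show ?thesis using mixed \<open>E a b\<close> by blast
    next
      case 3
      then show ?thesis using mixed[OF \<open>E b a\<close>] by (blast intro: raag_eq.sym)
    next
      case 4
      then show ?thesis
        using \<open>E a b\<close> raag_eq.comm[of E "(a, False)" "(b, False)" "[]" "[]"]
        by (simp add: f partial_conj_def gen_def)
    qed
  qed
qed

lemma is_endo_out0:
  assumes "symp E" and "irreflp E"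
  shows "f \<in> out0 E \<Longrightarrow> is_endo E f"
proof (induction rule: out0.induct)
  case (gen f)
  then show ?case by (rule is_endo_laurence[OF assms])
next
  case (comp f g)
  then show ?case using is_endo_comp[OF assms(1)] by blast
next
  case (eq f g)
  then show ?case using is_endo_raag_eq by blast
qed (simp_all add: is_endo_inner inverse_auts_def)

section \<open>Abelianisation\<close>

definition exp_sum :: "'v word \<Rightarrow> 'v \<Rightarrow> int" where
  "exp_sum w u = (\<Sum>x\<leftarrow>w. if fst x = u then (if snd x then -1 else 1) else 0)"

lemma exp_sum_simps [simp]:
  "exp_sum [] u = 0"
  "exp_sum (x # w) u = (if fst x = u then (if snd x then -1 else 1) else 0) + exp_sum w u"
  "exp_sum (w @ w') u = exp_sum w u + exp_sum w' u"
  by (simp_all add: exp_sum_def)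

lemma exp_sum_inv_word [simp]: "exp_sum (inv_word w) u = - exp_sum w u"
  by (induction w) (auto simp: inv_letter_def)

lemma exp_sum_gen [simp]: "exp_sum (gen v) u = of_bool (v = u)"
  by (simp add: gen_def)

lemma exp_sum_raag_eq: "raag_eq E w w' \<Longrightarrow> exp_sum w = exp_sum w'"
  by (induction rule: raag_eq.induct) (auto simp: inv_letter_def fun_eq_iff)

lemma mem_of_exp_sum_nonzero: "exp_sum w u \<noteq> 0 \<Longrightarrow> u \<in> fst ` set w"
  by (induction w) (auto split: if_splits)

lemma exp_sum_ext: "exp_sum (ext f w) u = (\<Sum>x\<in>UNIV. exp_sum w x * exp_sum (f x) u)"
  for f :: "'v::finite \<Rightarrow> 'v word"
proof (induction w)
  case (Cons y w)
  have "exp_sum (letter_image f (a, s)) u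
      = (\<Sum>x\<in>UNIV. (if a = x then (if s then -1 else 1) else 0) * exp_sum (f x) u)" for a s
    by (cases s) (simp_all add: if_distrib[where f = "\<lambda>z. z * _"] cong: if_cong)
  then show ?case using Cons by (cases y) (simp add: distrib_right sum.distrib)
qed simp

type_synonym 'v int_matrix = "'v \<Rightarrow> 'v \<Rightarrow> int"

definition mat_mult :: "'v::finite int_matrix \<Rightarrow> 'v int_matrix \<Rightarrow> 'v int_matrix" where
  "mat_mult P Q u v = (\<Sum>x\<in>UNIV. P u x * Q x v)"

definition mat_one :: "'v int_matrix" where
  "mat_one u v = of_bool (u = v)"

lemma mat_mult_assoc: "mat_mult (mat_mult P Q) R = mat_mult P (mat_mult Q R)"
  by (auto simp: fun_eq_iff mat_mult_def sum_distrib_left sum_distrib_right mult.assoc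
      intro: sum.swap)

lemma mat_mult_one [simp]: "mat_mult mat_one P = P" "mat_mult P mat_one = P"
  by (simp_all add: fun_eq_iff mat_mult_def mat_one_def)

text \<open>Column \<open>v\<close> of the matrix is the image of \<open>v\<close> in the abelianisation \<open>\<int>\<^sup>V\<close>.\<close>
definition abel_matrix :: "('v \<Rightarrow> 'v word) \<Rightarrow> 'v int_matrix" where
  "abel_matrix f u v = exp_sum (f v) u"

lemma abel_matrix_comp: "abel_matrix (comp f g) = mat_mult (abel_matrix f) (abel_matrix g)"
  for g :: "'v::finite \<Rightarrow> 'v word"
  by (simp add: fun_eq_iff abel_matrix_def mat_mult_def comp_def exp_sum_ext mult.commute)

lemma abel_matrix_gen [simp]: "abel_matrix gen = mat_one"
  by (simp add: fun_eq_iff abel_matrix_def mat_one_def eq_commute)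

lemma abel_matrix_raag_eq: "(\<And>v. raag_eq E (f v) (g v)) \<Longrightarrow> abel_matrix f = abel_matrix g"
  using exp_sum_raag_eq by (fastforce simp: fun_eq_iff abel_matrix_def)

lemma lk_subset_st_trans:
  "symp E \<Longrightarrow> lk E a \<subseteq> st E b \<Longrightarrow> lk E b \<subseteq> st E c \<Longrightarrow> lk E a \<subseteq> st E c"
  unfolding symp_def lk_def st_def by blast

definition dominance_triangular :: "('v \<Rightarrow> 'v \<Rightarrow> bool) \<Rightarrow> 'v int_matrix \<Rightarrow> bool" where
  "dominance_triangular E M \<longleftrightarrow> (\<forall>u v. M u v \<noteq> 0 \<longrightarrow> lk E v \<subseteq> st E u)"

text \<open>The triangular inverse is carried along because \<open>out0\<close> is closed under inverses.\<close>
definition triangular_unit :: "('v::finite \<Rightarrow> 'v \<Rightarrow> bool) \<Rightarrow> 'v int_matrix \<Rightarrow> bool" where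
  "triangular_unit E M \<longleftrightarrow> dominance_triangular E M \<and>
     (\<exists>N. dominance_triangular E N \<and> mat_mult M N = mat_one \<and> mat_mult N M = mat_one)"

lemma dominance_triangular_mat_one: "dominance_triangular E mat_one"
  by (auto simp: dominance_triangular_def mat_one_def st_def)

lemma dominance_triangular_mat_mult:
  assumes "symp E" and "dominance_triangular E P" and "dominance_triangular E Q"
  shows "dominance_triangular E (mat_mult P Q)"
  unfolding dominance_triangular_def
proof (intro allI impI)
  fix u v assume "mat_mult P Q u v \<noteq> 0"
  then obtain x where "P u x * Q x v \<noteq> 0"
    unfolding mat_mult_def by (rule sum.not_neutral_contains_not_neutral)
  then have "lk E v \<subseteq> st E x" and "lk E x \<subseteq> st E u"
    using assms(2,3) by (simp_all add: dominance_triangular_def)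
  then show "lk E v \<subseteq> st E u" by (rule lk_subset_st_trans[OF assms(1)])
qed

lemma triangular_unit_mat_one: "triangular_unit E mat_one"
  unfolding triangular_unit_def using dominance_triangular_mat_one by fastforce

lemma triangular_unit_mat_mult:
  assumes "symp E" and "triangular_unit E P" and "triangular_unit E Q"
  shows "triangular_unit E (mat_mult P Q)"
proof -
  obtain P' Q' where P': "dominance_triangular E P'" "mat_mult P P' = mat_one" "mat_mult P' P = mat_one"
    and Q': "dominance_triangular E Q'" "mat_mult Q Q' = mat_one" "mat_mult Q' Q = mat_one"
    using assms(2,3) unfolding triangular_unit_def by blast
  have "mat_mult (mat_mult P Q) (mat_mult Q' P') = mat_one"
    by (metis P'(2) Q'(2) mat_mult_assoc mat_mult_one(1))
  moreover have "mat_mult (mat_mult Q' P') (mat_mult P Q) = mat_one"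
    by (metis P'(3) Q'(3) mat_mult_assoc mat_mult_one(1))
  ultimately show ?thesis
    using assms P'(1) Q'(1) dominance_triangular_mat_mult
    unfolding triangular_unit_def by blast
qed

lemma triangular_unit_inverse:
  assumes "triangular_unit E M" and "mat_mult M Q = mat_one" and "mat_mult Q M = mat_one"
  shows "triangular_unit E Q"
proof -
  obtain N where N: "dominance_triangular E N" "mat_mult M N = mat_one" "mat_mult N M = mat_one"
    using assms(1) unfolding triangular_unit_def by blast
  have "Q = mat_mult (mat_mult N M) Q" using N(3) by simp
  also have "\<dots> = N" using assms(2) by (simp add: mat_mult_assoc)
  finally show ?thesis
    using assms N unfolding triangular_unit_def by blast
qed

lemma triangular_unit_abel_matrixI:
  assumes "dominance_triangular E (abel_matrix f)" and "dominance_triangular E (abel_matrix g)"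
    and "abel_matrix (comp f g) = mat_one" and "abel_matrix (comp g f) = mat_one"
  shows "triangular_unit E (abel_matrix f)"
  using assms unfolding triangular_unit_def abel_matrix_comp by blast

lemma triangular_unit_laurence:
  assumes "laurence E f"
  shows "triangular_unit E (abel_matrix f)"
  using assms unfolding laurence_def
proof (elim disjE exE conjE)
  fix v assume "f = inversion v"
  moreover have "comp (inversion v) (inversion v) = gen"
    by (simp add: fun_eq_iff comp_def inversion_def gen_def)
  moreover have "dominance_triangular E (abel_matrix (inversion v))"
    by (auto simp: dominance_triangular_def abel_matrix_def inversion_def st_def)
  ultimately show ?thesis by (metis abel_matrix_gen triangular_unit_abel_matrixI)
next
  fix v w assume "v \<noteq> w" and "lk E v \<subseteq> st E w" and f: "f = transvection v w"
  define f' where "f' = (\<lambda>u. if u = v then [(v, False), (w, True)] else gen u)"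
  have "abel_matrix (comp f f') = mat_one" "abel_matrix (comp f' f) = mat_one"
    using \<open>v \<noteq> w\<close>
    by (auto simp: fun_eq_iff f f'_def abel_matrix_def mat_one_def comp_def transvection_def
        gen_def)
  moreover have "dominance_triangular E (abel_matrix f)" "dominance_triangular E (abel_matrix f')"
    using \<open>lk E v \<subseteq> st E w\<close>
    by (auto simp: dominance_triangular_def abel_matrix_def f f'_def transvection_def st_def
        split: if_splits)
  ultimately show ?thesis by (rule triangular_unit_abel_matrixI[rotated 2])
next
  fix v K assume "f = partial_conj v K"
  then have "abel_matrix f = mat_one"
    by (auto simp: fun_eq_iff abel_matrix_def mat_one_def partial_conj_def)
  then show ?thesis by (simp add: triangular_unit_mat_one)
qed

lemma triangular_unit_abel_matrix_out0:
  assumes "symp E"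
  shows "f \<in> out0 E \<Longrightarrow> triangular_unit E (abel_matrix f)"
proof (induction rule: out0.induct)
  case (gen f)
  then show ?case by (rule triangular_unit_laurence)
next
  case (inn c)
  have "abel_matrix (inner c) = mat_one"
    by (simp add: fun_eq_iff abel_matrix_def mat_one_def inner_def eq_commute)
  then show ?case by (simp add: triangular_unit_mat_one)
next
  case (comp f g)
  then show ?case by (simp add: abel_matrix_comp triangular_unit_mat_mult[OF assms])
next
  case (inv f g)
  then have "abel_matrix (comp f g) = mat_one" "abel_matrix (comp g f) = mat_one"
    using abel_matrix_raag_eq[of E _ gen] unfolding inverse_auts_def by (metis abel_matrix_gen)+
  with inv.IH show ?case by (metis abel_matrix_comp triangular_unit_inverse)
next
  case (eq f g)
  then show ?case using abel_matrix_raag_eq by metis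
qed

section \<open>Permutations of vertices\<close>

lemma ext_perm_aut: "ext (perm_aut \<sigma>) w = map (apfst \<sigma>) w"
  by (induction w) (auto simp: perm_aut_def gen_def letter_image_def apfst_def map_prod_def)

lemma perm_aut_comp: "perm_aut (\<tau> \<circ> \<sigma>) = comp (perm_aut \<tau>) (perm_aut \<sigma>)"
  by (simp add: fun_eq_iff comp_def perm_aut_def)

lemma perm_aut_id_out0: "perm_aut id \<in> out0 E"
proof -
  have "perm_aut id = inner []" by (simp add: fun_eq_iff perm_aut_def inner_def)
  then show ?thesis using out0.inn by metis
qed

lemma lk_subset_st_if_perm_aut_out0:
  fixes \<sigma> :: "'v::finite \<Rightarrow> 'v"
  assumes "symp E" and "perm_aut \<sigma> \<in> out0 E"
  shows "lk E v \<subseteq> st E (\<sigma> v)"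
proof -
  have "dominance_triangular E (abel_matrix (perm_aut \<sigma>))"
    using triangular_unit_abel_matrix_out0[OF assms] by (simp add: triangular_unit_def)
  moreover have "abel_matrix (perm_aut \<sigma>) (\<sigma> v) v = 1"
    by (simp add: abel_matrix_def perm_aut_def)
  ultimately show ?thesis by (simp add: dominance_triangular_def)
qed

definition twins :: "('v \<Rightarrow> 'v \<Rightarrow> bool) \<Rightarrow> 'v \<Rightarrow> 'v \<Rightarrow> bool" where
  "twins E a b \<longleftrightarrow> lk E a \<subseteq> st E b \<and> lk E b \<subseteq> st E a"

lemma equivp_twins:
  assumes "symp E"
  shows "equivp (twins E)"
proof (rule equivpI)
  show "reflp (twins E)" by (auto intro: reflpI simp: twins_def st_def)
  show "symp (twins E)" by (auto intro: sympI simp: twins_def)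
  show "transp (twins E)"
    unfolding twins_def by (intro transpI) (meson lk_subset_st_trans[OF assms])
qed

text \<open>On \<open>a\<close> and \<open>b\<close> the product of transvections and inversions below is the swap followed by
  conjugation with \<open>a\<close>. Undoing that conjugation moves every vertex outside \<open>st a\<close> except \<open>b\<close>;
  these form a union of components of \<open>\<Gamma> - st a\<close> because \<open>lk b \<subseteq> st a\<close>, so a partial
  conjugation restores them.\<close>
lemma perm_aut_transpose_out0:
  assumes "symp E" and "a \<noteq> b" and "twins E a b"
  shows "perm_aut (transpose a b) \<in> out0 E"
proof -
  define K where "K = - st E a - {b}"
  have lk: "lk E a \<subseteq> st E b" "lk E b \<subseteq> st E a" using assms(3) by (simp_all add: twins_def)
  have K: "union_of_components E a K"
    unfolding union_of_components_def K_def using lk assms(1)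
    by (auto simp: st_def lk_def dest: sympD)
  have transvection: "laurence E (transvection v w)" if "v \<noteq> w" "lk E v \<subseteq> st E w" for v w
    using that unfolding laurence_def by blast
  have "laurence E (partial_conj a K)" using K by (auto simp: laurence_def)
  moreover have "laurence E (transvection a b)" "laurence E (transvection b a)"
    using transvection assms(2) lk by auto
  moreover have "laurence E (inversion v)" for v by (auto simp: laurence_def)
  ultimately have F_out0: "comp (partial_conj a K) (comp (inner [(a, True)])
      (comp (transvection a b) (comp (comp (inversion a) (comp (transvection b a) (inversion a)))
        (comp (transvection a b) (inversion b))))) \<in> out0 E" (is "?F \<in> _")
    by (intro out0.comp out0.inn out0.gen) assumption+
  have "a \<notin> K" "b \<notin> K" by (auto simp: K_def st_def)
  have free_reduce_F: "free_reduce [] (?F x) = free_reduce [] (perm_aut (transpose a b) x)"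
    if "x \<in> {a, b} \<union> K" for x
    using that assms(2) \<open>a \<notin> K\<close> \<open>b \<notin> K\<close>
    by (auto simp: comp_def inner_def transvection_def inversion_def partial_conj_def gen_def
        perm_aut_def)
  have "raag_eq E (?F x) (perm_aut (transpose a b) x)" for x
  proof (cases "x \<in> {a, b} \<union> K")
    case True
    then show ?thesis by (intro raag_eq_if_free_reduce_eq free_reduce_F)
  next
    case False
    then have "x \<noteq> a" "x \<noteq> b" "E a x" by (auto simp: K_def st_def lk_def)
    have "?F x = [(a, True), (x, False), (a, False)]"
      using False \<open>x \<noteq> a\<close> \<open>x \<noteq> b\<close> \<open>a \<notin> K\<close>
      by (simp add: comp_def inner_def transvection_def inversion_def partial_conj_def gen_def)
    also have "raag_eq E (\<dots>) [(x, False), (a, True), (a, False)]"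
      using \<open>E a x\<close> raag_eq.comm[of E "(a, True)" "(x, False)" "[]" "[(a, False)]"] by simp
    also have "raag_eq E (\<dots>) (perm_aut (transpose a b) x)"
      using \<open>x \<noteq> a\<close> \<open>x \<noteq> b\<close> by (intro raag_eq_if_free_reduce_eq) (simp add: perm_aut_def gen_def)
    finally show ?thesis .
  qed
  then show ?thesis using out0.eq[OF F_out0] by blast
qed

lemma bij_induct_transpose_related [consumes 3, case_names id transpose]:
  fixes \<sigma> :: "'a::finite \<Rightarrow> 'a"
  assumes "bij \<sigma>" and "equivp R" and "\<And>x. R x (\<sigma> x)"
    and "P id" and "\<And>a b \<tau>. a \<noteq> b \<Longrightarrow> R a b \<Longrightarrow> P \<tau> \<Longrightarrow> P (transpose a b \<circ> \<tau>)"
  shows "P \<sigma>"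
proof -
  have "P \<sigma>" if "card {x. \<sigma> x \<noteq> x} = n" "inj \<sigma>" "\<And>x. R x (\<sigma> x)" for n \<sigma>
    using that
  proof (induction n arbitrary: \<sigma> rule: less_induct)
    case (less n)
    show ?case
    proof (cases "\<sigma> = id")
      case False
      then obtain v where v: "\<sigma> v \<noteq> v" by (auto simp: fun_eq_iff)
      define \<tau> where "\<tau> = transpose v (\<sigma> v)"
      have \<sigma>_eq: "\<sigma> = transpose v (\<sigma> v) \<circ> (\<tau> \<circ> \<sigma>)"
        by (simp add: \<tau>_def fun_eq_iff)
      have "{x. (\<tau> \<circ> \<sigma>) x \<noteq> x} \<subseteq> {x. \<sigma> x \<noteq> x} - {v}"
        using less.prems(2) v by (auto simp: \<tau>_def transpose_def dest: injD)
      then have "card {x. (\<tau> \<circ> \<sigma>) x \<noteq> x} \<le> card ({x. \<sigma> x \<noteq> x} - {v})"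
        by (intro card_mono) simp_all
      also have "\<dots> < n"
        using less.prems(1) v by (intro card_Diff1_less[THEN less_le_trans]) simp_all
      finally have "card {x. (\<tau> \<circ> \<sigma>) x \<noteq> x} < n" .
      moreover have "inj (\<tau> \<circ> \<sigma>)"
        using less.prems(2) by (simp add: \<tau>_def inj_compose)
      moreover have "R x ((\<tau> \<circ> \<sigma>) x)" for x
      proof -
        consider "\<sigma> x = v" | "x = v" | "\<sigma> x \<noteq> v" "\<sigma> x \<noteq> \<sigma> v"
          using less.prems(2) by (metis injD)
        then show ?thesis
        proof cases
          case 1
          then show ?thesis
            using less.prems(3)[of x] less.prems(3)[of v] equivp_transp[OF assms(2)]
            by (simp add: \<tau>_def)
        next
          case 2
          then show ?thesis using equivp_reflp[OF assms(2)] by (simp add: \<tau>_def)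
        next
          case 3
          then show ?thesis using less.prems(3)[of x] by (simp add: \<tau>_def)
        qed
      qed
      ultimately have "P (\<tau> \<circ> \<sigma>)" using less.IH by blast
      then show ?thesis
        using assms(5) v less.prems(3)[of v] \<sigma>_eq by metis
    qed (use assms(4) in \<open>simp only:\<close>)
  qed
  with assms(1,3) show ?thesis by (simp add: bij_is_inj)
qed

lemma perm_aut_out0_if_twins:
  fixes \<sigma> :: "'v::finite \<Rightarrow> 'v"
  assumes "symp E" and "bij \<sigma>" and "\<And>v. twins E v (\<sigma> v)"
  shows "perm_aut \<sigma> \<in> out0 E"
  using assms(2) equivp_twins[OF assms(1)] assms(3)
proof (induction \<sigma> rule: bij_induct_transpose_related)
  case id
  then show ?case by (rule perm_aut_id_out0)
next
  case (transpose a b \<tau>)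
  then show ?case
    unfolding perm_aut_comp by (intro out0.comp perm_aut_transpose_out0[OF assms(1)])
qed

text \<open>Some power \<open>\<sigma> ^^ n\<close> with \<open>n > 0\<close> is the identity, so \<open>x\<close> is reached from \<open>\<sigma> x\<close>
  by iterating \<open>\<sigma>\<close>.\<close>
lemma bij_step_reverse:
  fixes \<sigma> :: "'a::finite \<Rightarrow> 'a"
  assumes "bij \<sigma>" and "reflp R" and "transp R" and "\<And>x. R x (\<sigma> x)"
  shows "R (\<sigma> x) x"
proof -
  have "permutation \<sigma>"
    using assms(1) by (auto simp: permutation_permutes intro: bij_imp_permutes)
  then obtain n where n: "(\<sigma> ^^ n) = id" "n > 0" by (rule permutation_is_nilpotent)
  have iterate: "R y ((\<sigma> ^^ k) y)" for y k
  proof (induction k)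
    case 0
    then show ?case using assms(2) by (simp add: reflpD)
  next
    case (Suc k)
    then show ?case using assms(3,4) by (auto dest: transpD)
  qed
  have "(\<sigma> ^^ (n - 1)) (\<sigma> x) = (\<sigma> ^^ n) x"
    using n(2) by (metis Suc_diff_1 comp_apply funpow_Suc_right)
  then show ?thesis using iterate[of "\<sigma> x" "n - 1"] n(1) by simp
qed

lemma adjacent_if_adjacent_twin:
  "symp E \<Longrightarrow> E u v \<Longrightarrow> twins E v v' \<Longrightarrow> u \<noteq> v' \<Longrightarrow> E u v'"
  by (auto simp: twins_def lk_def st_def dest: sympD)

lemma adjacent_image_if_twins:
  assumes "symp E" and "irreflp E" and "inj \<sigma>" and "\<And>x. twins E x (\<sigma> x)" and "E u v"
  shows "E (\<sigma> u) (\<sigma> v)"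
proof -
  have "u \<noteq> v" using assms(2,5) by (auto dest: irreflpD)
  then have "\<sigma> u \<noteq> \<sigma> v" using assms(3) by (auto dest: injD)
  note step = adjacent_if_adjacent_twin[OF assms(1)]
  show ?thesis
  proof (cases "u = \<sigma> v")
    case False
    then have "E (\<sigma> v) u" using step[OF assms(5) assms(4)] assms(1) by (auto dest: sympD)
    then have "E (\<sigma> v) (\<sigma> u)" using step assms(4) \<open>\<sigma> u \<noteq> \<sigma> v\<close> by metis
    then show ?thesis using assms(1) by (auto dest: sympD)
  next
    case True
    show ?thesis
    proof (cases "v = \<sigma> u")
      case False
      have "E v u" using assms(1,5) by (auto dest: sympD)
      then have "E (\<sigma> u) v" using step assms(1,4) False by (metis sympD)
      moreover have "twins E v u" using assms(4)[of v] True by simp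
      moreover have "\<sigma> u \<noteq> u" using True \<open>\<sigma> u \<noteq> \<sigma> v\<close> by simp
      ultimately show ?thesis using step True by metis
    qed (use True assms(1,5) in \<open>auto dest: sympD\<close>)
  qed
qed

lemma graph_aut_if_twins:
  assumes "symp E" and "irreflp E" and "bij \<sigma>" and "\<And>x. twins E x (\<sigma> x)"
  shows "graph_aut E \<sigma>"
proof -
  have "twins E x (inv \<sigma> x)" for x
    using assms(4)[of "inv \<sigma> x"] equivp_symp[OF equivp_twins[OF assms(1)]]
      surj_f_inv_f[OF bij_is_surj[OF assms(3)]] by metis
  moreover have "inj (inv \<sigma>)" using assms(3) by (simp add: bij_imp_bij_inv bij_is_inj)
  ultimately have "E (\<sigma> u) (\<sigma> v) \<Longrightarrow> E u v" for u v
    using adjacent_image_if_twins[OF assms(1,2), of "inv \<sigma>"] assms(3) by (metis bij_inv_eq_iff)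
  then show ?thesis
    using adjacent_image_if_twins[OF assms(1,2) bij_is_inj[OF assms(3)] assms(4)] assms(3)
    unfolding graph_aut_def by blast
qed

section \<open>Stabilisers of special subgroups\<close>

lemma comp_inner_Nil [simp]: "comp (inner []) f = f"
proof -
  have ext_inner_Nil: "ext (inner []) w = w" for w
    by (induction w) (auto simp: inner_def gen_def letter_image_def)
  show ?thesis by (simp add: fun_eq_iff comp_def ext_inner_Nil)
qed

lemma mem_if_stabilises_perm_aut:
  assumes "stabilises E (perm_aut \<sigma>) \<Delta>" and "v \<in> \<Delta>"
  shows "\<sigma> v \<in> \<Delta>"
proof -
  obtain c where c: "image_of E (comp (inner c) (perm_aut \<sigma>)) (special E \<Delta>) = special E \<Delta>"
    using assms(1) unfolding stabilises_def by blast
  have "gen v \<in> special E \<Delta>"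
    using assms(2) raag_eq.refl[of E "gen v"] unfolding special_def
    by (intro CollectI exI[of _ "gen v"]) (simp add: gen_def)
  moreover have "ext (comp (inner c) (perm_aut \<sigma>)) (gen v) = c @ gen (\<sigma> v) @ inv_word c"
    by (simp add: comp_def perm_aut_def inner_def)
  ultimately have "c @ gen (\<sigma> v) @ inv_word c \<in> special E \<Delta>"
    using raag_eq.refl c unfolding image_of_def by force
  then obtain w where w: "set (map fst w) \<subseteq> \<Delta>" "raag_eq E (c @ gen (\<sigma> v) @ inv_word c) w"
    unfolding special_def by auto
  have "exp_sum w (\<sigma> v) = exp_sum (c @ gen (\<sigma> v) @ inv_word c) (\<sigma> v)"
    using exp_sum_raag_eq[OF w(2)] by simp
  then have "exp_sum w (\<sigma> v) \<noteq> 0" by simp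
  then show ?thesis using mem_of_exp_sum_nonzero w(1) by fastforce
qed

lemma image_of_perm_aut_special:
  assumes "symp E" and "is_endo E (perm_aut \<sigma>)" and "bij \<sigma>"
  shows "image_of E (perm_aut \<sigma>) (special E \<Delta>) = special E (\<sigma> ` \<Delta>)"
proof (intro antisym subsetI)
  fix w assume "w \<in> image_of E (perm_aut \<sigma>) (special E \<Delta>)"
  then obtain u u' where u: "raag_eq E (ext (perm_aut \<sigma>) u) w"
    and u': "set (map fst u') \<subseteq> \<Delta>" "raag_eq E u u'"
    unfolding image_of_def special_def by blast
  have "raag_eq E (ext (perm_aut \<sigma>) u) (map (apfst \<sigma>) u')"
    using raag_eq_ext[OF assms(1,2) u'(2)] by (simp add: ext_perm_aut)
  then have "raag_eq E w (map (apfst \<sigma>) u')"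
    using u raag_eq.sym raag_eq.trans by blast
  moreover have "set (map fst (map (apfst \<sigma>) u')) \<subseteq> \<sigma> ` \<Delta>"
    using u'(1) by auto
  ultimately show "w \<in> special E (\<sigma> ` \<Delta>)" unfolding special_def by blast
next
  fix w assume "w \<in> special E (\<sigma> ` \<Delta>)"
  then obtain w' where w': "set (map fst w') \<subseteq> \<sigma> ` \<Delta>" "raag_eq E w w'"
    unfolding special_def by blast
  define u where "u = map (apfst (inv \<sigma>)) w'"
  have "apfst \<sigma> (apfst (inv \<sigma>) x) = x" for x :: "'a \<times> bool"
    using surj_f_inv_f[OF bij_is_surj[OF assms(3)]] by (cases x) simp
  then have "ext (perm_aut \<sigma>) u = w'" by (simp add: u_def ext_perm_aut map_idI)
  moreover have "set (map fst u) \<subseteq> \<Delta>"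
    using w'(1) bij_is_inj[OF assms(3)] by (auto simp: u_def)
  then have "u \<in> special E \<Delta>"
    using raag_eq.refl unfolding special_def by blast
  ultimately show "w \<in> image_of E (perm_aut \<sigma>) (special E \<Delta>)"
    using raag_eq.sym[OF w'(2)] unfolding image_of_def by auto
qed

lemma stabilises_perm_aut:
  assumes "symp E" and "is_endo E (perm_aut \<sigma>)" and "bij \<sigma>" and "\<sigma> ` \<Delta> = \<Delta>"
  shows "stabilises E (perm_aut \<sigma>) \<Delta>"
  unfolding stabilises_def
  using image_of_perm_aut_special[OF assms(1-3)] assms(4) by (intro exI[of _ "[]"]) simp

lemma acts_trivially_perm_aut:
  assumes "\<And>v. v \<in> \<Delta> \<Longrightarrow> \<sigma> v = v"
  shows "acts_trivially E (perm_aut \<sigma>) \<Delta>"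
  unfolding acts_trivially_def
proof (intro exI[of _ "[]"] allI impI)
  fix w :: "'a word" assume "set (map fst w) \<subseteq> \<Delta>"
  then have "ext (perm_aut \<sigma>) w = w"
    using assms by (auto simp: ext_perm_aut apfst_def map_prod_def intro!: map_idI)
  then show "raag_eq E (ext (comp (inner []) (perm_aut \<sigma>)) w) w" by (simp add: raag_eq.refl)
qed

lemma stabilises_if_acts_trivially:
  assumes "symp E" and "is_endo E f" and "acts_trivially E f \<Delta>" and "\<Delta>' \<subseteq> \<Delta>"
  shows "stabilises E f \<Delta>'"
proof -
  obtain c where c: "\<And>w. set (map fst w) \<subseteq> \<Delta> \<Longrightarrow> raag_eq E (ext (comp (inner c) f) w) w"
    using assms(3) unfolding acts_trivially_def by blast
  define h where "h = comp (inner c) f"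
  have h: "is_endo E h" unfolding h_def by (rule is_endo_comp[OF assms(1) is_endo_inner assms(2)])
  have fixed: "raag_eq E (ext h w) w" if "set (map fst w) \<subseteq> \<Delta>'" for w
    using c that assms(4) unfolding h_def by blast
  have "image_of E h (special E \<Delta>') = special E \<Delta>'"
  proof (intro antisym subsetI)
    fix w assume "w \<in> image_of E h (special E \<Delta>')"
    then obtain u u' where "raag_eq E (ext h u) w" "set (map fst u') \<subseteq> \<Delta>'" "raag_eq E u u'"
      unfolding image_of_def special_def by blast
    then have "raag_eq E w u'"
      using raag_eq_ext[OF assms(1) h] fixed raag_eq.sym raag_eq.trans by metis
    with \<open>set (map fst u') \<subseteq> \<Delta>'\<close> show "w \<in> special E \<Delta>'" unfolding special_def by blast
  next
    fix w assume "w \<in> special E \<Delta>'"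
    then obtain w' where "set (map fst w') \<subseteq> \<Delta>'" "raag_eq E w w'"
      unfolding special_def by blast
    then have "raag_eq E (ext h w') w" and "w' \<in> special E \<Delta>'"
      using fixed raag_eq.sym raag_eq.trans raag_eq.refl unfolding special_def by blast+
    then show "w \<in> image_of E h (special E \<Delta>')" unfolding image_of_def by blast
  qed
  then show ?thesis unfolding stabilises_def h_def by blast
qed

lemma saturated_mem_if_subset_of_trivial:
  assumes "symp E" and "irreflp E" and "saturated E G H"
    and "\<Delta> \<in> H" and "\<Delta>' \<subseteq> \<Delta>" and "\<Delta>' \<noteq> UNIV"
  shows "\<Delta>' \<in> G"
proof -
  have "stabilises E f \<Delta>'" if "inO E G H f" for f
    using that assms(4,5) is_endo_out0[OF assms(1,2)] stabilises_if_acts_trivially[OF assms(1)]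
    unfolding inO_def by blast
  then show ?thesis using assms(3,6) unfolding saturated_def by blast
qed

section \<open>Graph automorphisms in \<open>Out\<^sup>0(A\<^sub>\<Gamma>; \<G>, \<H>\<^sup>t)\<close>\<close>

lemma reflp_G_le: "reflp (G_le E G)"
  by (auto intro: reflpI simp: G_le_def st_def)

lemma transp_G_le: "symp E \<Longrightarrow> transp (G_le E G)"
  unfolding G_le_def by (intro transpI) (metis lk_subset_st_trans)

lemma G_equiv_if_inO_perm_aut:
  fixes \<sigma> :: "'v::finite \<Rightarrow> 'v"
  assumes "symp E" and "bij \<sigma>" and "inO E G H (perm_aut \<sigma>)"
  shows "G_equiv E G v (\<sigma> v)"
proof -
  have out0: "perm_aut \<sigma> \<in> out0 E" and stab: "\<And>\<Delta>. \<Delta> \<in> G \<Longrightarrow> stabilises E (perm_aut \<sigma>) \<Delta>"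
    using assms(3) by (simp_all add: inO_def)
  have le: "G_le E G x (\<sigma> x)" for x
    unfolding G_le_def
    using lk_subset_st_if_perm_aut_out0[OF assms(1) out0] mem_if_stabilises_perm_aut[OF stab] by blast
  have "G_le E G (\<sigma> v) v"
    by (rule bij_step_reverse[OF assms(2) reflp_G_le transp_G_le[OF assms(1)] le])
  with le show ?thesis by (simp add: G_equiv_def)
qed

lemma graph_aut_inO_perm_aut_if_G_equiv:
  fixes \<sigma> :: "'v::finite \<Rightarrow> 'v"
  assumes "symp E" and "irreflp E" and "saturated E G H"
    and "bij \<sigma>" and "\<And>v. G_equiv E G v (\<sigma> v)"
  shows "graph_aut E \<sigma> \<and> inO E G H (perm_aut \<sigma>)"
proof -
  have twins: "twins E v (\<sigma> v)" for v
    using assms(5) by (simp add: G_equiv_def G_le_def twins_def)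
  have out0: "perm_aut \<sigma> \<in> out0 E" by (rule perm_aut_out0_if_twins[OF assms(1,4) twins])
  have invariant: "\<sigma> ` \<Delta> = \<Delta>" if "\<Delta> \<in> G" for \<Delta>
  proof (rule endo_inj_surj)
    show "\<sigma> ` \<Delta> \<subseteq> \<Delta>"
    proof (rule image_subsetI)
      fix x assume "x \<in> \<Delta>"
      then show "\<sigma> x \<in> \<Delta>" using assms(5)[of x] that by (simp add: G_equiv_def G_le_def)
    qed
    show "inj_on \<sigma> \<Delta>" using bij_is_inj[OF assms(4)] by (rule inj_on_subset) simp
  qed simp
  have stab: "stabilises E (perm_aut \<sigma>) \<Delta>" if "\<Delta> \<in> G" for \<Delta>
    using stabilises_perm_aut[OF assms(1) is_endo_out0[OF assms(1,2) out0] assms(4) invariant[OF that]] .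
  have fixed: "\<sigma> v = v" if "\<Delta> \<in> H" and "v \<in> \<Delta>" for \<Delta> v
  proof (cases "{v} = UNIV")
    case False
    then have "{v} \<in> G"
      using saturated_mem_if_subset_of_trivial[OF assms(1-3) that(1)] that(2) by blast
    then show ?thesis using assms(5)[of v] by (auto simp: G_equiv_def G_le_def)
  next
    case True
    then show ?thesis by (metis UNIV_I singletonD)
  qed
  have "acts_trivially E (perm_aut \<sigma>) \<Delta>" if "\<Delta> \<in> H" for \<Delta>
    by (rule acts_trivially_perm_aut) (rule fixed[OF that])
  then show ?thesis
    using graph_aut_if_twins[OF assms(1,2,4) twins] out0 stab by (simp add: inO_def)
qed

theorem lemma7p7:
  fixes E :: "'v::finite \<Rightarrow> 'v \<Rightarrow> bool" and G H :: "'v set set"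
  assumes "\<forall>u v. E u v \<longrightarrow> E v u"
    and "\<forall>v. \<not> E v v"
    and "saturated E G H"
  shows "{\<sigma>. graph_aut E \<sigma> \<and> inO E G H (perm_aut \<sigma>)}
       = {\<sigma>. bij \<sigma> \<and> (\<forall>v. G_equiv E G v (\<sigma> v))}"
proof -
  have sym: "symp E" and irrefl: "irreflp E"
    using assms(1,2) by (simp_all add: symp_def irreflp_def)
  show ?thesis
  proof (intro set_eqI iffI)
    fix \<sigma> :: "'v \<Rightarrow> 'v"
    assume "\<sigma> \<in> {\<sigma>. graph_aut E \<sigma> \<and> inO E G H (perm_aut \<sigma>)}"
    then have "bij \<sigma>" and "inO E G H (perm_aut \<sigma>)" by (simp_all add: graph_aut_def)
    then show "\<sigma> \<in> {\<sigma>. bij \<sigma> \<and> (\<forall>v. G_equiv E G v (\<sigma> v))}"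
      using G_equiv_if_inO_perm_aut[OF sym] by blast
  next
    fix \<sigma> :: "'v \<Rightarrow> 'v"
    assume "\<sigma> \<in> {\<sigma>. bij \<sigma> \<and> (\<forall>v. G_equiv E G v (\<sigma> v))}"
    then show "\<sigma> \<in> {\<sigma>. graph_aut E \<sigma> \<and> inO E G H (perm_aut \<sigma>)}"
      using graph_aut_inO_perm_aut_if_G_equiv[OF sym irrefl assms(3)] by blast
  qed
qed

end
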